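(* Let $p\ge5$ be prime and $m\ge2$ an integer. Then the polynomial $$f_p=1+\sum_{k=0}^{(p-1)/2}(-1)^k\frac{p}{p-k}\binom{p-k}{k}m^kZ^{p-2k}\in\mathbb{Z}[Z]$$ is irreducible in $\mathbb{Q}[Z]$.
   Context: This polynomial equals $\sqrt m^{\,p}F_p(Z/\sqrt m)+1$ where $F_p(Z)=2T_p(Z/2)$ with $T_p$ the Chebyshev polynomial of the first kind; it is the De Moivre polynomial $f_p(Z,d,R)$ with $d=-1/(2m^{(p-1)/2})$, $R=(1-4m^p)/(4m^{p-1})$ (so $D=d^2-R=m$). *)

theory Defs
  imports "HOL-Computational_Algebra.Polynomial"
begin

definition fpoly :: "nat \<Rightarrow> int \<Rightarrow> rat poly" where
  "fpoly p m = 1 + (\<Sum>k = 0..(p - 1) div 2.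
      monom ((-1) ^ k * (of_nat p / of_nat (p - k)) * of_nat ((p - k) choose k) * (of_int m) ^ k)
            (p - 2 * k))"

end

theory Submission
  imports Defs "HOL-Computational_Algebra.Fundamental_Theorem_Algebra"
begin

text \<open>Over \<open>\<complex>\<close> we have \<open>f\<^sub>p(u + m/u) = 1 + u\<^sup>p + (m/u)\<^sup>p\<close> (Dickson's identity), so the roots of
  \<open>f\<^sub>p\<close> are the \<open>p\<close> numbers \<open>u + m/u\<close> with \<open>u\<^sup>p = \<alpha>\<close>, where \<open>\<alpha>\<close> is a non-real root of
  \<open>X\<^sup>2 + X + m\<^sup>p\<close>, so that \<open>\<alpha> + \<alpha>\<^sup>* = -1\<close> and \<open>\<alpha> \<alpha>\<^sup>* = m\<^sup>p\<close>. A factor \<open>g\<close> of \<open>f\<^sub>p\<close> over \<open>\<rat>\<close> of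
  degree strictly between \<open>0\<close> and \<open>p\<close> singles out a proper nonempty set \<open>A\<close> of \<open>p\<close>-th roots of
  \<open>\<alpha>\<close>, namely the common roots of \<open>X\<^sup>p - \<alpha>\<close> and of the numerator of \<open>g(X + m/X)\<close>. Both are
  polynomials over \<open>K = \<rat>(\<alpha>)\<close>, so their gcd lies in \<open>K[X]\<close> and \<open>P = \<Prod>A \<in> K\<close>. Since
  \<open>P\<^sup>p = \<alpha>\<^bsup>|A|\<^esup>\<close> with \<open>|A|\<close> prime to \<open>p\<close>, some \<open>Q \<in> K\<close> has \<open>Q\<^sup>p = \<alpha>\<close>. Then \<open>Q Q\<^sup>* = m\<close> and
  \<open>Q + Q\<^sup>*\<close> is rational, so \<open>f\<^sub>p(Q + Q\<^sup>*) = 1 + \<alpha> + \<alpha>\<^sup>* = 0\<close> exhibits a rational root of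
  \<open>f\<^sub>p\<close>, which the rational root test rules out.\<close>

section \<open>Dickson polynomials\<close>

definition dickson2_term :: "'a::comm_ring_1 \<Rightarrow> 'a \<Rightarrow> nat \<Rightarrow> nat \<Rightarrow> 'a" where
  "dickson2_term s m n k = (-1)^k * of_nat ((n - k) choose k) * m^k * s^(n - 2*k)"

definition dickson2 :: "'a::comm_ring_1 \<Rightarrow> 'a \<Rightarrow> nat \<Rightarrow> 'a" where
  "dickson2 s m n = (\<Sum>k\<le>n. dickson2_term s m n k)"

lemma dickson2_term_eq_0: "n < 2*k \<Longrightarrow> dickson2_term s m n k = 0"
  unfolding dickson2_term_def by (simp add: binomial_eq_0)

lemma dickson2_term_Suc_Suc:
  "dickson2_term s m (Suc (Suc n)) (Suc k) = s * dickson2_term s m (Suc n) (Suc k) - m * dickson2_term s m n k"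
proof (cases "k \<le> n")
  case True
  have pascal: "((Suc n - k) choose (Suc k)) = ((n - k) choose (Suc k)) + ((n - k) choose k)"
    using True by (simp add: Suc_diff_le)
  show ?thesis
  proof (cases "2*k+1 \<le> n")
    case True
    obtain j where "n - 2*k = Suc j" "Suc n - 2 * Suc k = j" "Suc (Suc n) - 2 * Suc k = Suc j"
      using True by (intro that[of "n - 2*k - 1"]) auto
    then show ?thesis
      unfolding dickson2_term_def diff_Suc_Suc pascal of_nat_add by (simp add: algebra_simps)
  next
    case False
    then have vanish: "((n - k) choose (Suc k)) = 0" by (simp add: binomial_eq_0)
    show ?thesis
      unfolding dickson2_term_def diff_Suc_Suc pascal vanish by (simp add: algebra_simps)
  qed
next
  case False
  then show ?thesis unfolding dickson2_term_def by (simp add: binomial_eq_0)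
qed

lemma dickson2_0 [simp]: "dickson2 s m 0 = 1"
  by (simp add: dickson2_def dickson2_term_def)

lemma dickson2_1 [simp]: "dickson2 s m (Suc 0) = s"
  by (simp add: dickson2_def dickson2_term_def)

lemma dickson2_Suc_Suc: "dickson2 s m (Suc (Suc n)) = s * dickson2 s m (Suc n) - m * dickson2 s m n"
proof -
  have "dickson2 s m (Suc (Suc n)) =
      dickson2_term s m (Suc (Suc n)) 0 + (\<Sum>k\<le>Suc n. dickson2_term s m (Suc (Suc n)) (Suc k))"
    unfolding dickson2_def by (subst sum.atMost_Suc_shift) simp
  also have "\<dots> = s * dickson2_term s m (Suc n) 0 + (\<Sum>k\<le>Suc n. s * dickson2_term s m (Suc n) (Suc k))
      - (\<Sum>k\<le>Suc n. m * dickson2_term s m n k)"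
    by (simp add: dickson2_term_Suc_Suc sum_subtractf) (simp add: dickson2_term_def)
  also have "s * dickson2_term s m (Suc n) 0 + (\<Sum>k\<le>Suc n. s * dickson2_term s m (Suc n) (Suc k))
      = s * dickson2 s m (Suc n)"
    unfolding dickson2_def by (subst (2) sum.atMost_Suc_shift) (simp add: sum_distrib_left ring_distribs dickson2_term_eq_0)
  also have "(\<Sum>k\<le>Suc n. m * dickson2_term s m n k) = m * dickson2 s m n"
    by (simp add: dickson2_def sum_distrib_left dickson2_term_eq_0)
  finally show ?thesis .
qed

lemma dickson2_eq_half_sum: "dickson2 s m n = (\<Sum>k\<le>n div 2. dickson2_term s m n k)"
  unfolding dickson2_def by (rule sum.mono_neutral_right) (auto intro!: dickson2_term_eq_0)

lemma power_sum_eq_dickson2: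
  fixes x y :: "'a::comm_ring_1"
  shows "x^Suc (Suc n) + y^Suc (Suc n) = dickson2 (x+y) (x*y) (Suc (Suc n)) - x*y * dickson2 (x+y) (x*y) n"
proof (induction n rule: induct_nat_012)
  case (ge2 n)
  let ?D = "dickson2 (x+y) (x*y)"
  have "x^Suc (Suc (Suc (Suc n))) + y^Suc (Suc (Suc (Suc n)))
      = (x+y) * (x^Suc (Suc (Suc n)) + y^Suc (Suc (Suc n))) - x*y * (x^Suc (Suc n) + y^Suc (Suc n))"
    by (simp only: power_Suc) (simp add: algebra_simps)
  also have "\<dots> = (x+y) * (?D (Suc (Suc (Suc n))) - x*y * ?D (Suc n)) - x*y * (?D (Suc (Suc n)) - x*y * ?D n)"
    by (simp only: ge2.IH)
  also have "\<dots> = ?D (Suc (Suc (Suc (Suc n)))) - x*y * ?D (Suc (Suc n))"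
    by (simp add: dickson2_Suc_Suc[of _ _ "Suc (Suc n)"] dickson2_Suc_Suc[of _ _ n] algebra_simps)
  finally show ?case .
qed (simp_all add: dickson2_Suc_Suc algebra_simps)

text \<open>The coefficient \<open>n/(n-k) \<cdot> (n-k choose k)\<close> of the Dickson polynomial (see
  \<open>dickson_coeff_mult\<close>), written as a sum of binomials to make it visibly a natural number.\<close>
definition dickson_coeff :: "nat \<Rightarrow> nat \<Rightarrow> nat" where
  "dickson_coeff n k = (if k = 0 then 1 else ((n - k) choose k) + ((n - k - 1) choose (k - 1)))"

definition dickson :: "'a::comm_ring_1 \<Rightarrow> 'a \<Rightarrow> nat \<Rightarrow> 'a" where
  "dickson s m n = (\<Sum>k\<le>n div 2. (-1)^k * of_nat (dickson_coeff n k) * m^k * s^(n - 2*k))"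

lemma dickson_eq_dickson2:
  "dickson s m (Suc (Suc n)) = dickson2 s m (Suc (Suc n)) - m * dickson2 s m n"
proof -
  define tail where "tail k = (if k = 0 then 0 else
    (-1)^k * of_nat ((Suc (Suc n) - k - 1) choose (k - 1)) * m^k * s^(Suc (Suc n) - 2*k))" for k
  have "dickson s m (Suc (Suc n)) =
      (\<Sum>k\<le>Suc (n div 2). dickson2_term s m (Suc (Suc n)) k) + (\<Sum>k\<le>Suc (n div 2). tail k)"
    unfolding dickson_def sum.distrib[symmetric]
    by (rule sum.cong) (auto simp: dickson_coeff_def dickson2_term_def tail_def algebra_simps)
  also have "(\<Sum>k\<le>Suc (n div 2). tail k) = (\<Sum>j\<le>n div 2. tail (Suc j))"
    by (subst sum.atMost_Suc_shift) (simp add: tail_def)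
  also have "\<dots> = (\<Sum>j\<le>n div 2. - m * dickson2_term s m n j)"
    by (rule sum.cong) (auto simp: tail_def dickson2_term_def algebra_simps)
  finally show ?thesis
    by (simp add: dickson2_eq_half_sum[of _ _ n] dickson2_eq_half_sum[of _ _ "Suc (Suc n)"]
        sum_distrib_left sum_negf)
qed

lemma power_sum_eq_dickson:
  fixes x y :: "'a::comm_ring_1"
  assumes "n \<ge> 1"
  shows "x^n + y^n = dickson (x+y) (x*y) n"
proof (cases "n = 1")
  case True
  then show ?thesis by (simp add: dickson_def dickson_coeff_def)
next
  case False
  then obtain n' where "n = Suc (Suc n')"
    using assms by (metis One_nat_def not0_implies_Suc not_one_le_zero)
  then show ?thesis by (simp only: power_sum_eq_dickson2 dickson_eq_dickson2)
qed

lemma dickson_coeff_mult: "k \<le> n \<Longrightarrow> (n - k) * dickson_coeff n k = n * ((n - k) choose k)"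
proof (cases "k = 0")
  case False
  assume "k \<le> n"
  have "k * ((n - k) choose k) = (n - k) * ((n - k - 1) choose (k - 1))"
    using False times_binomial_minus1_eq[of k "n - k"] by simp
  then have "(n - k) * dickson_coeff n k = (n - k) * ((n - k) choose k) + k * ((n - k) choose k)"
    using False by (simp add: dickson_coeff_def algebra_simps)
  also have "\<dots> = n * ((n - k) choose k)" using \<open>k \<le> n\<close> by (simp add: algebra_simps)
  finally show ?thesis .
qed (simp add: dickson_coeff_def)

lemma of_nat_dickson_coeff:
  assumes "k < n"
  shows "(of_nat (dickson_coeff n k) :: 'a::field_char_0) = of_nat n / of_nat (n - k) * of_nat ((n - k) choose k)"
proof -
  have "(of_nat (n - k) :: 'a) * of_nat (dickson_coeff n k) = of_nat n * of_nat ((n - k) choose k)"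
    using dickson_coeff_mult[of k n] assms by (metis of_nat_mult less_imp_le)
  moreover have "(of_nat (n - k) :: 'a) \<noteq> 0" using assms by simp
  ultimately show ?thesis by (simp add: field_simps)
qed

lemma prime_dvd_dickson_coeff:
  assumes "prime p" "0 < k" "k < p"
  shows "p dvd dickson_coeff p k"
proof -
  have "p dvd (p - k) * dickson_coeff p k" using dickson_coeff_mult[of k p] assms by simp
  moreover have "\<not> p dvd (p - k)" using assms by (simp add: nat_dvd_not_less)
  ultimately show ?thesis using assms(1) prime_dvd_mult_iff by blast
qed

section \<open>Rational roots\<close>

lemma of_int_dickson: "of_int (dickson s m n) = dickson (of_int s) (of_int m) n"
  by (simp add: dickson_def of_int_sum)

lemma of_rat_dickson: "of_rat (dickson s m n) = dickson (of_rat s) (of_rat m) n"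
  by (simp add: dickson_def of_rat_sum of_rat_mult of_rat_power)

lemma sum_atMost_split_0: "(\<Sum>k\<le>N. f k) = f 0 + (\<Sum>k\<in>{1..N}. f k)"
  for f :: "nat \<Rightarrow> 'a::comm_monoid_add"
  by (simp add: atMost_atLeast0 sum.atLeast_Suc_atMost)

lemma dickson_of_int_frac:
  fixes a b m :: int
  assumes "b \<noteq> 0"
  shows "(of_int b)^n * dickson (of_int a / of_int b) (of_int m) n =
    (of_int (\<Sum>k\<le>n div 2. (-1)^k * int (dickson_coeff n k) * m^k * a^(n - 2*k) * b^(2*k)) :: 'a::field_char_0)"
  unfolding dickson_def of_int_sum sum_distrib_left
proof (rule sum.cong[OF refl])
  fix k assume "k \<in> {..n div 2}"
  then have "(of_int b :: 'a)^n = of_int b^(n - 2*k) * of_int b^(2*k)"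
    by (simp flip: power_add)
  then show "(of_int b :: 'a)^n * ((-1)^k * of_nat (dickson_coeff n k) * of_int m^k * (of_int a / of_int b)^(n - 2*k)) =
      of_int ((-1)^k * int (dickson_coeff n k) * m^k * a^(n - 2*k) * b^(2*k))"
    using assms by (simp add: power_divide field_simps)
qed

text \<open>The rational root test: \<open>1 + dickson Z m n\<close> is monic with integer coefficients.\<close>
lemma dickson_rational_root_Ints:
  fixes t :: rat and m :: int
  assumes "n \<ge> 1" and root: "1 + dickson t (of_int m) n = 0"
  shows "t \<in> \<int>"
proof -
  obtain a b where ab: "quotient_of t = (a, b)" by (cases "quotient_of t")
  have "b > 0" "coprime a b" "t = of_int a / of_int b"
    using ab quotient_of_denom_pos quotient_of_coprime quotient_of_div by blast+
  define c where "c k = (-1)^k * int (dickson_coeff n k) * m^k * a^(n - 2*k) * b^(2*k)" for k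
  have "(of_int (b^n + (\<Sum>k\<le>n div 2. c k)) :: rat) = (of_int b)^n * (1 + dickson t (of_int m) n)"
    using dickson_of_int_frac[where 'a=rat and a=a and b=b and m=m and n=n] \<open>b > 0\<close>
    unfolding \<open>t = _\<close> c_def by (simp add: ring_distribs)
  then have "b^n + (\<Sum>k\<le>n div 2. c k) = 0" using root by (simp only: of_int_eq_0_iff mult_zero_right)
  then have "a^n = - (b^n + (\<Sum>k\<in>{1..n div 2}. c k))"
    unfolding sum_atMost_split_0 by (simp add: c_def dickson_coeff_def algebra_simps)
  moreover have "b dvd b^n + (\<Sum>k\<in>{1..n div 2}. c k)"
    using assms(1) unfolding c_def by (intro dvd_add dvd_sum) (auto intro!: dvd_mult dvd_power)
  ultimately have "b dvd a^n" by (metis dvd_minus_iff)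
  then have "is_unit b"
    using \<open>coprime a b\<close> by (metis coprime_absorb_left coprime_commute coprime_power_right_iff)
  then show ?thesis using \<open>b > 0\<close> \<open>t = _\<close> by simp
qed

lemma dickson_int_root_unit:
  fixes a m :: int
  assumes "odd n" and root: "1 + dickson a m n = 0"
  shows "a = 1 \<or> a = -1"
proof -
  have "a dvd dickson a m n"
    unfolding dickson_def using assms(1)
    by (intro dvd_sum dvd_mult dvd_power) (auto elim!: oddE)
  then have "a dvd 1" using root by (metis add_eq_0_iff2 dvd_minus_iff)
  then show ?thesis by auto
qed

lemma dickson_one_ne:
  fixes m :: int
  assumes "prime p" "odd p"
  shows "1 + dickson 1 m p \<noteq> 0"
proof
  define c where "c k = (-1)^k * int (dickson_coeff p k) * m^k" for k
  assume "1 + dickson 1 m p = 0"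
  then have "2 + (\<Sum>k\<in>{1..p div 2}. c k) = 0"
    unfolding dickson_def sum_atMost_split_0 by (simp add: c_def dickson_coeff_def)
  moreover have "int p dvd (\<Sum>k\<in>{1..p div 2}. c k)"
  proof (rule dvd_sum)
    fix k assume "k \<in> {1..p div 2}"
    then have "p dvd dickson_coeff p k" using assms by (intro prime_dvd_dickson_coeff) auto
    then show "int p dvd c k" unfolding c_def by (simp add: int_dvd_int_iff)
  qed
  ultimately have "int p dvd 2" by (metis add_eq_0_iff2 dvd_minus_iff)
  then have "p dvd 2" by (metis int_dvd_int_iff of_nat_numeral)
  then have "p \<le> 2" by (simp add: dvd_imp_le)
  with assms prime_ge_2_nat[of p] show False by auto
qed

lemma dickson_minus_one_ne:
  fixes m :: int
  assumes p: "prime p" "p \<ge> 5" and m: "m \<ge> 2"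
  shows "1 + dickson (-1) m p \<noteq> 0"
proof
  define c where "c k = (-1)^k * int (dickson_coeff p k) * m^k" for k
  define N where "N = p div 2"
  have "odd p" using p prime_odd_nat by fastforce
  then have "2 * N < p" unfolding N_def by presburger
  have "N \<ge> 2" using p unfolding N_def by linarith
  have pdvd: "int p dvd int (dickson_coeff p k)" if "k \<in> {1..N}" for k
    using prime_dvd_dickson_coeff[of p k] p that \<open>2 * N < p\<close> by (auto simp: int_dvd_int_iff)
  assume "1 + dickson (-1) m p = 0"
  moreover have "dickson (-1) m p = - (\<Sum>k\<le>N. c k)"
    unfolding dickson_def N_def c_def sum_negf[symmetric]
  proof (rule sum.cong[OF refl])
    fix k assume "k \<in> {..p div 2}"
    then have "odd (p - 2*k)" using \<open>odd p\<close> \<open>2 * N < p\<close> unfolding N_def by auto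
    then show "(-1)^k * of_nat (dickson_coeff p k) * m^k * (-1)^(p - 2*k) =
        - ((-1)^k * int (dickson_coeff p k) * m^k)" by simp
  qed
  ultimately have "(\<Sum>k\<in>{1..N}. c k) = 0"
    unfolding sum_atMost_split_0 by (simp add: c_def dickson_coeff_def)
  moreover have "{1..N} = insert 1 {2..N}" using \<open>N \<ge> 2\<close> by auto
  moreover have "c 1 = - (int p * m)"
    using p by (simp add: c_def dickson_coeff_def)
  ultimately have sum_c: "(\<Sum>k\<in>{2..N}. c k) = int p * m" by simp
  have "m^2 dvd int p * m"
    unfolding sum_c[symmetric] c_def by (intro dvd_sum dvd_mult le_imp_power_dvd) auto
  then have "m dvd int p" using m by (simp add: power2_eq_square)
  then have "nat m dvd p" using m by (simp flip: int_dvd_int_iff)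
  then have "nat m = 1 \<or> nat m = p" using p(1) unfolding prime_nat_iff by blast
  then have "m = int p" using m by auto
  have "int p^3 dvd (\<Sum>k\<in>{2..N}. c k)"
  proof (rule dvd_sum)
    fix k assume "k \<in> {2..N}"
    have "int p * int p^2 dvd ((-1)^k * int (dickson_coeff p k)) * m^k"
      using pdvd[of k] \<open>k \<in> {2..N}\<close> unfolding \<open>m = int p\<close>
      by (intro mult_dvd_mono dvd_mult le_imp_power_dvd) auto
    then show "int p^3 dvd c k" unfolding c_def by (simp add: power_numeral_reduce)
  qed
  then have "int p^3 dvd int p^2"
    using sum_c \<open>m = int p\<close> by (simp add: power2_eq_square)
  then have "p^3 dvd p^2" by (simp flip: of_nat_power)
  then have "p^3 \<le> p^2" using p by (intro dvd_imp_le) auto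
  moreover have "p^2 < p^3" using p by (intro power_strict_increasing) auto
  ultimately show False by linarith
qed

lemma dickson_no_rational_root:
  fixes t :: rat and m :: int
  assumes "prime p" "p \<ge> 5" "m \<ge> 2"
  shows "1 + dickson t (of_int m) p \<noteq> 0"
proof
  assume root: "1 + dickson t (of_int m) p = 0"
  then obtain a where "t = of_int a"
    using dickson_rational_root_Ints[of p t m] assms by (auto elim: Ints_cases)
  then have "1 + dickson a m p = 0" using root by (simp flip: of_int_dickson)
  moreover have "odd p" using assms prime_odd_nat by fastforce
  ultimately have "a = 1 \<or> a = -1" by (rule dickson_int_root_unit[rotated])
  then show False
    using \<open>1 + dickson a m p = 0\<close> dickson_one_ne[of p m] dickson_minus_one_ne[of p m] assms \<open>odd p\<close>
    by auto
qed

section \<open>The polynomial \<open>f\<^sub>p\<close>\<close>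

lemma map_poly_of_rat_add:
  "map_poly (of_rat :: rat \<Rightarrow> 'a::field_char_0) (p + q) = map_poly of_rat p + map_poly of_rat q"
  by (intro poly_eqI) (simp add: coeff_map_poly of_rat_add)

lemma map_poly_of_rat_sum:
  "map_poly (of_rat :: rat \<Rightarrow> 'a::field_char_0) (\<Sum>i\<in>A. f i) = (\<Sum>i\<in>A. map_poly of_rat (f i))"
  by (induction A rule: infinite_finite_induct) (simp_all add: map_poly_of_rat_add)

lemma map_poly_of_rat_mult:
  "map_poly (of_rat :: rat \<Rightarrow> 'a::field_char_0) (p * q) = map_poly of_rat p * map_poly of_rat q"
  by (intro poly_eqI) (simp add: coeff_map_poly coeff_mult of_rat_sum of_rat_mult)

lemma poly_map_poly_of_rat_fpoly:
  assumes "odd p"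
  shows "poly (map_poly (of_rat :: rat \<Rightarrow> 'a::field_char_0) (fpoly p m)) z = 1 + dickson z (of_int m) p"
proof -
  have half: "(p - 1) div 2 = p div 2" using assms by (auto elim!: oddE)
  have "poly (map_poly (of_rat :: rat \<Rightarrow> 'a) (fpoly p m)) z = 1 + (\<Sum>k\<le>p div 2.
      of_rat ((-1) ^ k * (of_nat p / of_nat (p - k)) * of_nat ((p - k) choose k) * (of_int m) ^ k) * z^(p - 2 * k))"
    unfolding fpoly_def map_poly_of_rat_add map_poly_of_rat_sum atLeast0AtMost half
    by (simp add: map_poly_monom poly_sum poly_monom)
  also have "\<dots> = 1 + dickson z (of_int m) p"
    unfolding dickson_def
  proof (intro arg_cong2[where f="(+)"] refl sum.cong)
    fix k assume "k \<in> {..p div 2}"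
    then have "k < p" using assms odd_pos by fastforce
    then have "(-1) ^ k * (of_nat p / of_nat (p - k)) * of_nat ((p - k) choose k) * (of_int m) ^ k
        = (-1) ^ k * of_nat (dickson_coeff p k) * (of_int m ^ k :: rat)"
      by (simp add: of_nat_dickson_coeff)
    then show "of_rat ((-1) ^ k * (of_nat p / of_nat (p - k)) * of_nat ((p - k) choose k) * (of_int m) ^ k) * z^(p - 2 * k) =
        (-1)^k * of_nat (dickson_coeff p k) * (of_int m)^k * z^(p - 2*k)"
      by (simp add: of_rat_mult of_rat_power)
  qed
  finally show ?thesis .
qed

lemma degree_fpoly_le: "degree (fpoly p m) \<le> p"
  unfolding fpoly_def
  by (intro degree_add_le degree_sum_le) (auto intro: order.trans[OF degree_monom_le])

lemma coeff_fpoly_self: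
  assumes "p > 0"
  shows "coeff (fpoly p m) p = 1"
proof -
  have "coeff (monom c (p - 2 * k)) p = (if k = 0 then c else 0)" for c :: rat and k
    using assms by (auto simp: coeff_monom)
  then show ?thesis
    using assms by (simp add: fpoly_def coeff_sum coeff_1 sum.delta)
qed

lemma degree_fpoly: "p > 0 \<Longrightarrow> degree (fpoly p m) = p"
  using degree_fpoly_le[of p m] le_degree[of "fpoly p m" p] coeff_fpoly_self[of p m] by simp

section \<open>Polynomials over a subfield\<close>

locale field_subset =
  fixes K :: "'a::field set"
  assumes zero_mem [simp]: "0 \<in> K"
    and one_mem [simp]: "1 \<in> K"
    and add_mem [simp]: "x \<in> K \<Longrightarrow> y \<in> K \<Longrightarrow> x + y \<in> K"
    and uminus_mem [simp]: "x \<in> K \<Longrightarrow> - x \<in> K"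
    and mult_mem [simp]: "x \<in> K \<Longrightarrow> y \<in> K \<Longrightarrow> x * y \<in> K"
    and inverse_mem [simp]: "x \<in> K \<Longrightarrow> inverse x \<in> K"
begin

lemma diff_mem [simp]: "x \<in> K \<Longrightarrow> y \<in> K \<Longrightarrow> x - y \<in> K"
  using add_mem[of x "- y"] by simp

lemma divide_mem [simp]: "x \<in> K \<Longrightarrow> y \<in> K \<Longrightarrow> x / y \<in> K"
  by (simp add: divide_inverse)

lemma power_mem [simp]: "x \<in> K \<Longrightarrow> x ^ n \<in> K"
  by (induction n) simp_all

lemma sum_mem [simp]: "(\<And>i. i \<in> A \<Longrightarrow> f i \<in> K) \<Longrightarrow> sum f A \<in> K"
  by (induction A rule: infinite_finite_induct) simp_all

end

definition poly_over :: "'a set \<Rightarrow> 'a::zero poly \<Rightarrow> bool" where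
  "poly_over K q \<longleftrightarrow> (\<forall>i. coeff q i \<in> K)"

context field_subset
begin

lemma poly_over_0 [simp]: "poly_over K 0"
  by (simp add: poly_over_def)

lemma poly_over_pCons [simp]: "c \<in> K \<Longrightarrow> poly_over K q \<Longrightarrow> poly_over K (pCons c q)"
  by (simp add: poly_over_def coeff_pCons split: nat.split)

lemma poly_over_monom [simp]: "c \<in> K \<Longrightarrow> poly_over K (monom c n)"
  by (simp add: poly_over_def coeff_monom)

lemma poly_over_add [simp]: "poly_over K p \<Longrightarrow> poly_over K q \<Longrightarrow> poly_over K (p + q)"
  by (simp add: poly_over_def)

lemma poly_over_diff [simp]: "poly_over K p \<Longrightarrow> poly_over K q \<Longrightarrow> poly_over K (p - q)"
  by (simp add: poly_over_def)

lemma poly_over_smult [simp]: "c \<in> K \<Longrightarrow> poly_over K p \<Longrightarrow> poly_over K (smult c p)"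
  by (simp add: poly_over_def)

lemma poly_over_mult [simp]: "poly_over K p \<Longrightarrow> poly_over K q \<Longrightarrow> poly_over K (p * q)"
  by (simp add: poly_over_def coeff_mult)

lemma poly_over_1 [simp]: "poly_over K 1"
  by (simp add: poly_over_def coeff_1)

lemma poly_over_power [simp]: "poly_over K p \<Longrightarrow> poly_over K (p ^ n)"
  by (induction n) simp_all

lemma poly_over_sum [simp]: "(\<And>i. i \<in> A \<Longrightarrow> poly_over K (f i)) \<Longrightarrow> poly_over K (sum f A)"
  by (induction A rule: infinite_finite_induct) simp_all

lemma poly_over_division:
  assumes "poly_over K q" "poly_over K r" "r \<noteq> 0"
  obtains d s where "q = d * r + s" "poly_over K s" "s = 0 \<or> degree s < degree r"
  using assms(1)
proof (induction "degree q" arbitrary: q thesis rule: less_induct)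
  case less
  show ?case
  proof (cases "q = 0 \<or> degree q < degree r")
    case True
    then show ?thesis using less.prems by (intro less.prems(1)[of 0 q]) auto
  next
    case False
    define c where "c = lead_coeff q / lead_coeff r"
    define k where "k = degree q - degree r"
    define q' where "q' = q - monom c k * r"
    have "q \<noteq> 0" "degree r \<le> degree q" "c \<noteq> 0"
      using False assms(3) by (auto simp: c_def)
    then have deg: "degree (monom c k * r) = degree q"
      using assms(3) by (simp add: degree_mult_eq degree_monom_eq k_def)
    have "c \<in> K" using less.prems(2) assms(2) unfolding c_def poly_over_def by simp
    then have "poly_over K q'" unfolding q'_def using less.prems(2) assms(2) by simp
    have "coeff q' (degree q) = 0"
      using \<open>degree r \<le> degree q\<close> assms(3) by (simp add: q'_def c_def k_def coeff_monom_mult)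
    then have "q' = 0 \<or> degree q' < degree q"
      using degree_diff_le[of "q" "degree q" "monom c k * r"] deg
      by (metis le_antisym le_refl leading_coeff_0_iff linorder_not_le q'_def)
    then show ?thesis
    proof
      assume "q' = 0"
      then show ?thesis by (intro less.prems(1)[of "monom c k" 0]) (auto simp: q'_def)
    next
      assume "degree q' < degree q"
      then obtain d s where "q' = d * r + s" "poly_over K s" "s = 0 \<or> degree s < degree r"
        using less.hyps \<open>poly_over K q'\<close> by metis
      then show ?thesis
        by (intro less.prems(1)[of "d + monom c k" s]) (auto simp: q'_def algebra_simps)
    qed
  qed
qed

lemma least_vanishing_poly_dvd:
  assumes r: "poly_over K r" "r \<noteq> 0" "\<forall>a\<in>A. poly r a = 0"
    and least: "\<And>q. q \<noteq> 0 \<Longrightarrow> poly_over K q \<Longrightarrow> \<forall>a\<in>A. poly q a = 0 \<Longrightarrow> degree r \<le> degree q"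
    and q: "poly_over K q" "\<forall>a\<in>A. poly q a = 0"
  shows "r dvd q"
proof -
  obtain d s where ds: "q = d * r + s" "poly_over K s" "s = 0 \<or> degree s < degree r"
    using poly_over_division[OF q(1) r(1,2)] .
  have "\<forall>a\<in>A. poly s a = 0"
    using q(2) r(3) by (simp add: ds(1))
  then have "s = 0" using least[of s] ds(2,3) by fastforce
  then show ?thesis using ds(1) by simp
qed

lemma root_mem_of_power_mem:
  assumes "a \<in> K" "a \<noteq> 0" "P \<in> K" "P ^ n = a ^ d" "coprime d n" "d > 0"
  obtains Q where "Q \<in> K" "Q ^ n = a"
proof -
  obtain x y where xy: "d * x = n * y + 1"
    using bezout_nat[of d n] assms(5,6) by (auto simp: coprime_iff_gcd_eq_1)
  have "(P ^ x / a ^ y) ^ n = (P ^ n) ^ x / a ^ (n * y)"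
    by (simp add: power_divide flip: power_mult mult.commute)
  also have "\<dots> = a" using assms(2,4) by (simp flip: power_mult) (simp add: xy)
  finally show ?thesis using assms(1,3) by (intro that[of "P ^ x / a ^ y"]) simp_all
qed

end

lemma rsquarefree_dvd:
  assumes "rsquarefree p" "q dvd p" "q \<noteq> 0"
  shows "rsquarefree q"
  unfolding rsquarefree_def
proof (intro conjI allI assms(3))
  fix a
  have "order a q \<le> order a p"
    using assms by (intro dvd_imp_order_le) (auto simp: rsquarefree_def)
  then show "order a q = 0 \<or> order a q = 1"
    using assms(1) unfolding rsquarefree_def by (metis le_Suc_eq le_zero_eq One_nat_def)
qed

text \<open>The least-degree polynomial over \<open>K\<close> vanishing at the common roots divides both
  polynomials, so its roots are exactly the common roots, each simple; its constant coefficient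
  is then its leading coefficient times \<open>\<plusminus>\<close> their product.\<close>
lemma prod_common_roots_mem:
  fixes K :: "complex set" and X E :: "complex poly"
  assumes "field_subset K" "poly_over K X" "poly_over K E" "rsquarefree X"
  shows "(\<Prod>z | poly X z = 0 \<and> poly E z = 0. z) \<in> K"
proof -
  interpret field_subset K by fact
  define A where "A = {z. poly X z = 0 \<and> poly E z = 0}"
  define S where "S = {r. r \<noteq> 0 \<and> poly_over K r \<and> (\<forall>a\<in>A. poly r a = 0)}"
  have "X \<in> S" using assms(2,4) by (auto simp: S_def A_def rsquarefree_def)
  then obtain r where "r \<in> S" and least: "\<And>q. q \<in> S \<Longrightarrow> degree r \<le> degree q"
    using ex_has_least_nat[of "\<lambda>q. q \<in> S" X degree] by blast
  then have r: "poly_over K r" "r \<noteq> 0" "\<forall>a\<in>A. poly r a = 0" by (auto simp: S_def)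
  have least': "\<And>q. q \<noteq> 0 \<Longrightarrow> poly_over K q \<Longrightarrow> \<forall>a\<in>A. poly q a = 0 \<Longrightarrow> degree r \<le> degree q"
    using least by (simp add: S_def)
  have "r dvd X" by (rule least_vanishing_poly_dvd[OF r least' assms(2)]) (auto simp: A_def)
  have "r dvd E" by (rule least_vanishing_poly_dvd[OF r least' assms(3)]) (auto simp: A_def)
  have roots: "{z. poly r z = 0} = A"
  proof (intro equalityI subsetI)
    fix z assume "z \<in> {z. poly r z = 0}"
    then show "z \<in> A"
      using \<open>r dvd X\<close> \<open>r dvd E\<close> unfolding A_def by (auto elim!: dvdE)
  qed (use r(3) in simp)
  have "rsquarefree r" using rsquarefree_dvd[OF assms(4) \<open>r dvd X\<close> r(2)] .
  then have decomp: "smult (lead_coeff r) (\<Prod>z\<in>A. [:-z, 1:]) = r"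
    using complex_poly_decompose_rsquarefree[of r] unfolding roots by blast
  have "coeff r 0 = poly r 0" by (simp add: poly_0_coeff_0)
  also have "\<dots> = lead_coeff r * (\<Prod>z\<in>A. - z)"
    by (subst decomp[symmetric]) (simp add: poly_prod)
  also have "(\<Prod>z\<in>A. - z) = (-1) ^ card A * (\<Prod>z\<in>A. z)" by (rule prod_uminus)
  finally have "coeff r 0 = lead_coeff r * ((-1) ^ card A * (\<Prod>z\<in>A. z))" .
  then have "(\<Prod>z\<in>A. z) = coeff r 0 / (lead_coeff r * (-1) ^ card A)"
    using r(2) by (simp add: field_simps)
  then show ?thesis using r(1) unfolding A_def poly_over_def by simp
qed

lemma rsquarefree_pth_root_poly:
  fixes a :: "'a::field_char_0"
  assumes "a \<noteq> 0" "n > 0"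
  shows "rsquarefree (monom 1 n - [:a:])"
  unfolding rsquarefree_roots
proof (intro allI notI)
  fix z assume z: "poly (monom 1 n - [:a:]) z = 0 \<and> poly (pderiv (monom 1 n - [:a:])) z = 0"
  have "pderiv (monom 1 n - [:a:]) = monom (of_nat n) (n - 1)"
    by (simp add: pderiv_diff pderiv_monom pderiv_pCons)
  then have "z = 0" using z assms(2) by (simp add: poly_monom)
  then show False using z assms by (simp add: poly_monom power_0_left)
qed

definition recip_subst :: "'a::field poly \<Rightarrow> 'a \<Rightarrow> 'a poly" where
  "recip_subst g c = (\<Sum>i\<le>degree g. smult (coeff g i) ([:0, 1:] ^ (degree g - i) * [:c, 0, 1:] ^ i))"

lemma poly_recip_subst:
  assumes "u \<noteq> 0"
  shows "poly (recip_subst g c) u = u ^ degree g * poly g (u + c / u)"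
proof -
  have "poly (recip_subst g c) u = (\<Sum>i\<le>degree g. coeff g i * (u ^ (degree g - i) * (c + u * u) ^ i))"
    by (simp add: recip_subst_def poly_sum)
  also have "\<dots> = (\<Sum>i\<le>degree g. u ^ degree g * (coeff g i * (u + c / u) ^ i))"
  proof (rule sum.cong[OF refl])
    fix i assume "i \<in> {..degree g}"
    then have "u ^ degree g = u ^ (degree g - i) * u ^ i" by (simp flip: power_add)
    moreover have "c + u * u = u * (u + c / u)" using assms by (simp add: field_simps)
    ultimately show "coeff g i * (u ^ (degree g - i) * (c + u * u) ^ i) = u ^ degree g * (coeff g i * (u + c / u) ^ i)"
      by (simp add: power_mult_distrib)
  qed
  also have "\<dots> = u ^ degree g * poly g (u + c / u)"
    by (simp add: poly_altdef sum_distrib_left)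
  finally show ?thesis .
qed

lemma (in field_subset) poly_over_recip_subst:
  assumes "poly_over K g" "c \<in> K"
  shows "poly_over K (recip_subst g c)"
  unfolding recip_subst_def using assms(2) assms(1)[unfolded poly_over_def]
  by (intro poly_over_sum poly_over_smult poly_over_mult poly_over_power) simp_all

section \<open>Quadratic fields\<close>

lemma complex_of_rat_eq_of_real: "(of_rat r :: complex) = of_real (of_rat r)"
  by (cases r) (simp add: of_rat_rat of_real_divide)

definition qfield :: "complex \<Rightarrow> complex set" where
  "qfield \<alpha> = {of_rat a + of_rat b * \<alpha> | a b. True}"

lemma of_rat_mem_qfield [simp]: "of_rat a \<in> qfield \<alpha>"
  unfolding qfield_def by (intro CollectI exI[of _ a] exI[of _ 0]) simp

lemma mem_qfield_self [simp]: "\<alpha> \<in> qfield \<alpha>"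
  unfolding qfield_def by (intro CollectI exI[of _ 0] exI[of _ 1]) simp

lemma qfield_coords_eq_0:
  assumes "Im \<alpha> \<noteq> 0" "of_rat a + of_rat b * \<alpha> = 0"
  shows "a = 0" "b = 0"
proof -
  have "of_rat b * Im \<alpha> = 0"
    using arg_cong[OF assms(2), of Im] by (simp add: complex_of_rat_eq_of_real)
  then show "b = 0" using assms(1) by simp
  then show "a = 0" using assms(2) by simp
qed

lemma field_subset_qfield:
  assumes root: "\<alpha>^2 + \<alpha> + of_rat M = 0" and nonreal: "Im \<alpha> \<noteq> 0"
  shows "field_subset (qfield \<alpha>)"
proof
  have sq: "\<alpha>^2 = - \<alpha> - of_rat M" using root by (simp add: algebra_simps eq_neg_iff_add_eq_0)
  fix x y assume "x \<in> qfield \<alpha>"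
  then obtain a b where x: "x = of_rat a + of_rat b * \<alpha>" unfolding qfield_def by blast
  show "- x \<in> qfield \<alpha>"
    unfolding qfield_def x by (intro CollectI exI[of _ "-a"] exI[of _ "-b"]) (simp add: of_rat_minus)
  show "inverse x \<in> qfield \<alpha>"
  proof (cases "x = 0")
    case False
    \<comment> \<open>\<open>a - b - b \<alpha>\<close> is the conjugate of \<open>x\<close> in \<open>\<rat>(\<alpha>)\<close>, \<open>-1 - \<alpha>\<close> being the other root\<close>
    define N where "N = a^2 - a*b + b^2 * M"
    have "x * (of_rat (a - b) + of_rat (-b) * \<alpha>) =
        of_rat a * of_rat a - of_rat a * of_rat b - of_rat b * of_rat b * (\<alpha> + \<alpha>^2)"
      unfolding x by (simp add: of_rat_diff of_rat_minus algebra_simps power2_eq_square)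
    also have "\<dots> = of_rat N"
      unfolding N_def sq by (simp add: of_rat_diff of_rat_add of_rat_mult algebra_simps power2_eq_square)
    finally have norm: "x * (of_rat (a - b) + of_rat (-b) * \<alpha>) = of_rat N" .
    have "of_rat (a - b) + of_rat (-b) * \<alpha> \<noteq> 0"
      using qfield_coords_eq_0[OF nonreal, of "a - b" "-b"] False x by auto
    then have "N \<noteq> 0" using norm False by auto
    then have "inverse x = (of_rat (a - b) + of_rat (-b) * \<alpha>) / of_rat N"
      using norm False by (simp add: field_simps)
    also have "\<dots> = of_rat ((a - b) / N) + of_rat (-b / N) * \<alpha>"
      by (simp add: of_rat_divide of_rat_minus of_rat_diff add_divide_distrib diff_divide_distrib)
    finally show ?thesis unfolding qfield_def by blast
  qed (use of_rat_mem_qfield[of 0 \<alpha>] in simp)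
  assume "y \<in> qfield \<alpha>"
  then obtain c d where y: "y = of_rat c + of_rat d * \<alpha>" unfolding qfield_def by blast
  show "x + y \<in> qfield \<alpha>"
    unfolding qfield_def x y by (intro CollectI exI[of _ "a + c"] exI[of _ "b + d"]) (simp add: of_rat_add algebra_simps)
  have "x * y = of_rat a * of_rat c + (of_rat a * of_rat d + of_rat b * of_rat c) * \<alpha>
      + of_rat b * of_rat d * \<alpha>^2"
    unfolding x y by (simp add: algebra_simps power2_eq_square)
  also have "\<dots> = of_rat (a*c - b*d*M) + of_rat (a*d + b*c - b*d) * \<alpha>"
    unfolding sq by (simp add: of_rat_mult of_rat_add of_rat_diff algebra_simps)
  finally show "x * y \<in> qfield \<alpha>" unfolding qfield_def by blast
qed (use of_rat_mem_qfield[of 0 \<alpha>] of_rat_mem_qfield[of 1 \<alpha>] in simp_all)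

lemma qfield_add_cnj:
  assumes "cnj \<alpha> = -1 - \<alpha>" "z \<in> qfield \<alpha>"
  obtains t where "z + cnj z = of_rat t"
proof -
  obtain a b where z: "z = of_rat a + of_rat b * \<alpha>" using assms(2) unfolding qfield_def by blast
  then have "cnj z = of_rat a + of_rat b * (-1 - \<alpha>)"
    using assms(1) by (simp add: complex_of_rat_eq_of_real)
  then have "z + cnj z = of_rat (2*a - b)"
    unfolding z by (simp add: of_rat_diff of_rat_mult algebra_simps)
  then show ?thesis by (rule that)
qed

definition quadratic_root :: "real \<Rightarrow> complex" where
  "quadratic_root c = (-1 + \<i> * of_real (sqrt (4 * c - 1))) / 2"

lemma quadratic_root:
  assumes "c \<ge> 1"
  defines "\<alpha> \<equiv> quadratic_root c"
  shows "\<alpha>^2 + \<alpha> + of_real c = 0" "Im \<alpha> > 0" "cnj \<alpha> = -1 - \<alpha>" "\<alpha> * cnj \<alpha> = of_real c"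
proof -
  define s where "s = sqrt (4 * c - 1)"
  have "s > 0" "s^2 = 4 * c - 1" using assms(1) by (simp_all add: s_def)
  then have s2: "(of_real s :: complex)^2 = 4 * of_real c - 1"
    by (metis of_real_power of_real_diff of_real_mult of_real_numeral of_real_1)
  have \<alpha>: "\<alpha> = (-1 + \<i> * of_real s) / 2" unfolding \<alpha>_def quadratic_root_def s_def ..
  have "\<alpha>^2 + \<alpha> + of_real c = (4 * of_real c - 1 - (of_real s)^2) / 4"
    unfolding \<alpha> by (simp add: field_simps power2_eq_square)
  then show root: "\<alpha>^2 + \<alpha> + of_real c = 0" unfolding s2 by simp
  show "Im \<alpha> > 0" unfolding \<alpha> using \<open>s > 0\<close> by simp
  show cnj: "cnj \<alpha> = -1 - \<alpha>" unfolding \<alpha> by (simp add: complex_eq_iff)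
  have "\<alpha> * cnj \<alpha> = - (\<alpha>^2 + \<alpha>)" unfolding cnj by (simp add: algebra_simps power2_eq_square)
  also have "\<alpha>^2 + \<alpha> = - of_real c" using root by (simp add: eq_neg_iff_add_eq_0 add.assoc)
  finally show "\<alpha> * cnj \<alpha> = of_real c" by simp
qed

lemma mult_cnj_eq_of_power_eq:
  fixes Q :: complex
  assumes "Q ^ n = \<alpha>" "\<alpha> * cnj \<alpha> = of_real (c ^ n)" "c \<ge> 0" "n > 0"
  shows "Q * cnj Q = of_real c"
proof -
  have "of_real (((cmod Q)^2) ^ n) = (Q * cnj Q) ^ n"
    by (simp flip: complex_norm_square)
  also have "\<dots> = of_real (c ^ n)"
    using assms(1,2) by (simp add: power_mult_distrib flip: complex_cnj_power)
  finally have "(cmod Q)^2 = c"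
    using assms(3,4) by (simp only: of_real_eq_iff) (rule power_eq_imp_eq_base, simp_all)
  then show ?thesis by (simp flip: complex_norm_square)
qed

locale fpoly_setting =
  fixes p :: nat and m :: int
  assumes prime_p: "prime p" and p_ge_5: "p \<ge> 5" and m_ge_2: "m \<ge> 2"
begin

definition \<alpha> :: complex where "\<alpha> = quadratic_root (of_int (m ^ p))"

definition \<phi> :: "complex \<Rightarrow> complex" where "\<phi> u = u + of_int m / u"

lemma odd_p: "odd p"
  using prime_p p_ge_5 prime_odd_nat by fastforce

lemma
  shows alpha_root: "\<alpha>^2 + \<alpha> + of_int (m ^ p) = 0"
    and Im_alpha: "Im \<alpha> > 0"
    and cnj_alpha: "cnj \<alpha> = -1 - \<alpha>"
    and alpha_mult_cnj: "\<alpha> * cnj \<alpha> = of_int (m ^ p)"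
  using quadratic_root[of "of_int (m ^ p)"] m_ge_2 unfolding \<alpha>_def by simp_all

lemma alpha_ne_0: "\<alpha> \<noteq> 0"
  using Im_alpha by auto

lemma field_subset_qfield_alpha: "field_subset (qfield \<alpha>)"
  using field_subset_qfield[of \<alpha> "of_int (m ^ p)"] alpha_root Im_alpha by (simp add: of_rat_power)

lemma card_pth_roots_alpha: "card {u. u ^ p = \<alpha>} = p"
  using card_nth_roots[OF alpha_ne_0] p_ge_5 by simp

lemma poly_fpoly: "poly (map_poly of_rat (fpoly p m)) z = 1 + dickson z (of_int m) p"
  by (rule poly_map_poly_of_rat_fpoly[OF odd_p])

lemma fpoly_root_phi:
  assumes "u ^ p = \<alpha>"
  shows "1 + dickson (\<phi> u) (of_int m) p = 0"
proof -
  have "u \<noteq> 0" using assms alpha_ne_0 p_ge_5 by (auto simp: power_0_left)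
  then have "dickson (\<phi> u) (of_int m) p = u ^ p + (of_int m / u) ^ p"
    unfolding \<phi>_def using power_sum_eq_dickson[of p u "of_int m / u"] p_ge_5 by simp
  also have "(of_int m / u) ^ p = of_int (m ^ p) / \<alpha>"
    using assms by (simp add: power_divide)
  also have "\<dots> = cnj \<alpha>"
    using alpha_mult_cnj alpha_ne_0 by (simp add: field_simps)
  finally show ?thesis using assms cnj_alpha by simp
qed

lemma inj_on_phi: "inj_on \<phi> {u. u ^ p = \<alpha>}"
proof (rule inj_onI)
  fix u v assume u: "u \<in> {u. u ^ p = \<alpha>}" and v: "v \<in> {u. u ^ p = \<alpha>}" and "\<phi> u = \<phi> v"
  have "u \<noteq> 0" "v \<noteq> 0" using u v alpha_ne_0 p_ge_5 by (auto simp: power_0_left)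
  then have "(u - v) * (u * v - of_int m) = 0"
    using \<open>\<phi> u = \<phi> v\<close> unfolding \<phi>_def by (simp add: field_simps)
  moreover have "u * v \<noteq> of_int m"
  proof
    assume "u * v = of_int m"
    then have "(u * v) ^ p = of_int (m ^ p)" by simp
    then have "\<alpha> * \<alpha> = \<alpha> * cnj \<alpha>"
      using u v alpha_mult_cnj by (simp add: power_mult_distrib)
    then show False using alpha_ne_0 Im_alpha by (auto simp: complex_eq_iff)
  qed
  ultimately show "u = v" by simp
qed

text \<open>The \<open>p\<close> distinct numbers \<open>\<phi> u\<close> exhaust the roots, as \<open>f\<^sub>p\<close> has degree \<open>p\<close>.\<close>
lemma roots_fpoly: "{z. poly (map_poly of_rat (fpoly p m)) z = (0::complex)} = \<phi> ` {u. u ^ p = \<alpha>}"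
proof -
  let ?F = "map_poly (of_rat :: rat \<Rightarrow> complex) (fpoly p m)"
  have "degree ?F = p" using degree_fpoly[of p m] p_ge_5 by (simp add: degree_map_poly)
  then have "?F \<noteq> 0" using p_ge_5 by auto
  have sub: "\<phi> ` {u. u ^ p = \<alpha>} \<subseteq> {z. poly ?F z = 0}"
    using fpoly_root_phi by (auto simp: poly_fpoly)
  have "card {z. poly ?F z = 0} \<le> p"
    using card_poly_roots_bound[OF \<open>?F \<noteq> 0\<close>] \<open>degree ?F = p\<close> by simp
  moreover have "card (\<phi> ` {u. u ^ p = \<alpha>}) = p"
    using card_image[OF inj_on_phi] card_pth_roots_alpha by simp
  ultimately show ?thesis
    using card_subset_eq[OF poly_roots_finite[OF \<open>?F \<noteq> 0\<close>] sub]
      card_mono[OF poly_roots_finite[OF \<open>?F \<noteq> 0\<close>] sub] by simp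
qed

lemma card_factor_roots:
  fixes g :: "rat poly"
  assumes "g dvd fpoly p m" "0 < degree g" "degree g < p"
  defines "A \<equiv> {u. u ^ p = \<alpha> \<and> poly (map_poly of_rat g) (\<phi> u) = 0}"
  shows "0 < card A" "card A < p"
proof -
  let ?G = "map_poly (of_rat :: rat \<Rightarrow> complex) g"
  let ?R = "{u. u ^ p = \<alpha>}"
  have "degree ?G = degree g" by (simp add: degree_map_poly)
  then have "?G \<noteq> 0" using assms(2) by auto
  have "finite ?R" using card_pth_roots_alpha p_ge_5 card.infinite by fastforce
  have "A \<subseteq> ?R" by (auto simp: A_def)
  then have "finite A" using \<open>finite ?R\<close> finite_subset by blast
  obtain z where "poly ?G z = 0"
    using fundamental_theorem_of_algebra[of ?G] \<open>degree ?G = degree g\<close> assms(2)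
    by (auto simp: constant_degree)
  moreover obtain h where "fpoly p m = g * h" using assms(1) by (elim dvdE)
  ultimately have "poly (map_poly of_rat (fpoly p m)) z = 0" by (simp add: map_poly_of_rat_mult)
  then obtain u where "u \<in> ?R" "z = \<phi> u" using roots_fpoly by blast
  then have "u \<in> A" using \<open>poly ?G z = 0\<close> by (simp add: A_def)
  then show "0 < card A" using \<open>finite A\<close> card_gt_0_iff by blast
  show "card A < p"
  proof (rule ccontr)
    assume "\<not> card A < p"
    then have "A = ?R"
      using card_subset_eq[OF \<open>finite ?R\<close> \<open>A \<subseteq> ?R\<close>] card_mono[OF \<open>finite ?R\<close> \<open>A \<subseteq> ?R\<close>]
        card_pth_roots_alpha by simp
    then have "\<phi> ` ?R \<subseteq> {z. poly ?G z = 0}" by (auto simp: A_def)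
    then have "p \<le> card {z. poly ?G z = 0}"
      using card_mono[OF poly_roots_finite[OF \<open>?G \<noteq> 0\<close>]] card_image[OF inj_on_phi]
        card_pth_roots_alpha by metis
    then show False
      using card_poly_roots_bound[OF \<open>?G \<noteq> 0\<close>] \<open>degree ?G = degree g\<close> assms(3) by linarith
  qed
qed

lemma proper_factor_imp_pth_root:
  fixes g :: "rat poly"
  assumes "g dvd fpoly p m" "0 < degree g" "degree g < p"
  obtains Q where "Q \<in> qfield \<alpha>" "Q ^ p = \<alpha>"
proof -
  interpret field_subset "qfield \<alpha>" by (rule field_subset_qfield_alpha)
  let ?G = "map_poly (of_rat :: rat \<Rightarrow> complex) g"
  define A where "A = {u. u ^ p = \<alpha> \<and> poly ?G (\<phi> u) = 0}"
  define X where "X = monom 1 p - [:\<alpha>:]"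
  define E where "E = recip_subst ?G (of_int m)"
  have poly_X: "poly X u = 0 \<longleftrightarrow> u ^ p = \<alpha>" for u by (simp add: X_def poly_monom)
  have "u \<noteq> 0" if "u ^ p = \<alpha>" for u using that alpha_ne_0 p_ge_5 by (auto simp: power_0_left)
  then have "{u. poly X u = 0 \<and> poly E u = 0} = A"
    unfolding A_def E_def poly_X by (auto simp: poly_recip_subst \<phi>_def)
  moreover have "poly_over (qfield \<alpha>) E"
    unfolding E_def using of_rat_mem_qfield[of "of_int m" \<alpha>]
    by (intro poly_over_recip_subst) (simp_all add: poly_over_def coeff_map_poly)
  moreover have "poly_over (qfield \<alpha>) X" by (simp add: X_def)
  moreover have "rsquarefree X"
    unfolding X_def using alpha_ne_0 p_ge_5 by (intro rsquarefree_pth_root_poly) simp_all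
  ultimately have "(\<Prod>u\<in>A. u) \<in> qfield \<alpha>"
    using prod_common_roots_mem[OF field_subset_qfield_alpha] by metis
  moreover have "(\<Prod>u\<in>A. u) ^ p = \<alpha> ^ card A"
    by (simp add: A_def prod_power_distrib)
  moreover have "0 < card A" "card A < p"
    using card_factor_roots[OF assms] unfolding A_def by simp_all
  moreover from this have "coprime (card A) p"
    using prime_p by (metis coprime_commute nat_dvd_not_less prime_imp_coprime)
  ultimately show ?thesis
    using root_mem_of_power_mem[of \<alpha> "\<Prod>u\<in>A. u" p "card A"] alpha_ne_0 that by auto
qed

lemma no_pth_root_in_qfield:
  assumes "Q \<in> qfield \<alpha>" "Q ^ p = \<alpha>"
  shows False
proof -
  obtain t where t: "Q + cnj Q = of_rat t" using qfield_add_cnj[OF cnj_alpha assms(1)] .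
  have "Q * cnj Q = of_int m"
    using mult_cnj_eq_of_power_eq[OF assms(2), of "of_int m"] alpha_mult_cnj m_ge_2 p_ge_5 by simp
  then have "1 + dickson (Q + cnj Q) (of_int m) p = 1 + Q ^ p + cnj Q ^ p"
    using power_sum_eq_dickson[of p Q "cnj Q"] p_ge_5 by simp
  also have "\<dots> = 0" using assms(2) cnj_alpha by (simp flip: complex_cnj_power)
  finally have "of_rat (1 + dickson t (of_int m) p) = (0 :: complex)"
    unfolding t by (simp add: of_rat_add of_rat_dickson)
  then show False using dickson_no_rational_root[OF prime_p p_ge_5 m_ge_2] by simp
qed

lemma degree_factor_fpoly:
  assumes "g dvd fpoly p m" "degree g < p"
  shows "degree g = 0"
  using proper_factor_imp_pth_root[OF assms(1) _ assms(2)] no_pth_root_in_qfield by blast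

end

theorem mainTheorem15:
  fixes p :: nat and m :: int
  assumes "prime p" and "p \<ge> 5" and "m \<ge> 2"
  shows "irreducible (fpoly p m)"
proof -
  interpret fpoly_setting p m using assms by unfold_locales
  have deg: "degree (fpoly p m) = p" using degree_fpoly assms(2) by simp
  show ?thesis
  proof (rule irreducibleI)
    show nonzero: "fpoly p m \<noteq> 0" using deg assms(2) by auto
    show "\<not> fpoly p m dvd 1" using is_unit_iff_degree[OF nonzero] deg assms(2) by simp
  next
    fix a b assume ab: "fpoly p m = a * b"
    then have "a \<noteq> 0" "b \<noteq> 0" using deg assms(2) by auto
    then have "degree a + degree b = p" using ab deg by (simp add: degree_mult_eq)
    then have "degree a = 0 \<or> degree b = 0"
      using degree_factor_fpoly[of a] degree_factor_fpoly[of b] ab by fastforce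
    then show "a dvd 1 \<or> b dvd 1"
      using \<open>a \<noteq> 0\<close> \<open>b \<noteq> 0\<close> by (auto simp: is_unit_iff_degree)
  qed
qed

end
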